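(* Let $j$ be odd and $d$ an integer with $2d=3j+1$. Let $\gamma(t)=(t,t^2,\dots,t^d)$ be the moment curve in $\mathbb{R}^d$, and for $i=1,\dots,j$ let $\mu_i$ be the mass concentrated on the arc $\gamma((i,i+1))$ (the push-forward under $\gamma$ of the normalized Lebesgue measure on $(i,i+1)$). Then there are exactly $\binom{j}{(j-1)/2}$ ordered pairs $(H_1,H_2)$ of unoriented, non-parallel affine hyperplanes in $\mathbb{R}^d$ that equipart $\mu_1,\dots,\mu_j$ and such that $H_2$ passes through the origin.
   Context: A mass is a finite Borel probability measure vanishing on every affine hyperplane. Two hyperplanes $H_1,H_2$ equipart masses $\mu_1,\dots,\mu_j$ if each of the four regions $H_1^{a}\cap H_2^{b}$ ($a,b\in\{0,1\}$, $H_i^0,H_i^1$ the two closed sides of $H_i$) has measure $\tfrac14$ in every $\mu_\ell$. *)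

theory Defs
  imports "HOL-Analysis.Analysis"
begin

text \<open>Euclidean space R^d, represented by functions nat => real with coordinates
  0..d-1 (coordinate k is the (k+1)-st coordinate) and all other coordinates 0.\<close>
definition Rn :: "nat \<Rightarrow> (nat \<Rightarrow> real) set" where
  "Rn d = {x. \<forall>i\<ge>d. x i = 0}"

definition lin :: "nat \<Rightarrow> (nat \<Rightarrow> real) \<Rightarrow> (nat \<Rightarrow> real) \<Rightarrow> real" where
  "lin d a x = (\<Sum>i<d. a i * x i)"

definition affine_hyperplane :: "nat \<Rightarrow> (nat \<Rightarrow> real) set \<Rightarrow> bool" where
  "affine_hyperplane d H \<longleftrightarrow>
     (\<exists>a b. (\<exists>i<d. a i \<noteq> 0) \<and> H = {x \<in> Rn d. lin d a x = b})"

text \<open>The closed sides of a hyperplane H (a set containing exactly the two closed half-spaces).\<close>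
definition closed_sides :: "nat \<Rightarrow> (nat \<Rightarrow> real) set \<Rightarrow> (nat \<Rightarrow> real) set set" where
  "closed_sides d H =
     {S. \<exists>a b. (\<exists>i<d. a i \<noteq> 0) \<and> H = {x \<in> Rn d. lin d a x = b}
              \<and> S = {x \<in> Rn d. lin d a x \<le> b}}"

definition parallel_hyperplanes :: "nat \<Rightarrow> (nat \<Rightarrow> real) set \<Rightarrow> (nat \<Rightarrow> real) set \<Rightarrow> bool" where
  "parallel_hyperplanes d H1 H2 \<longleftrightarrow>
     (\<exists>a b1 b2. (\<exists>i<d. a i \<noteq> 0) \<and> H1 = {x \<in> Rn d. lin d a x = b1}
                                    \<and> H2 = {x \<in> Rn d. lin d a x = b2})"

definition moment_curve :: "nat \<Rightarrow> real \<Rightarrow> (nat \<Rightarrow> real)" where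
  "moment_curve d t = (\<lambda>k. if k < d then t ^ (k + 1) else 0)"

text \<open>mu_i: push-forward under gamma of normalized Lebesgue measure on (i, i+1)
  (the interval has length 1, so no normalization constant appears).\<close>
definition arc_mass :: "nat \<Rightarrow> nat \<Rightarrow> (nat \<Rightarrow> real) set \<Rightarrow> real" where
  "arc_mass d i S = measure lborel {t \<in> {real i <..< real i + 1}. moment_curve d t \<in> S}"

definition equiparts :: "nat \<Rightarrow> nat \<Rightarrow> (nat \<Rightarrow> real) set \<Rightarrow> (nat \<Rightarrow> real) set \<Rightarrow> bool" where
  "equiparts d j H1 H2 \<longleftrightarrow>
     (\<forall>S1 \<in> closed_sides d H1. \<forall>S2 \<in> closed_sides d H2. \<forall>i \<in> {1..j}.
        arc_mass d i (S1 \<inter> S2) = 1 / 4)"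

end

theory Submission
  imports Defs "HOL-Computational_Algebra.Polynomial"
begin

text \<open>
  On the moment curve \<open>\<gamma>\<close>, an affine hyperplane \<open>\<langle>a, x\<rangle> = b\<close> becomes the zero set of the
  polynomial \<open>\<langle>a, \<gamma>(t)\<rangle> - b\<close> of degree at most \<open>d\<close>; so a hyperplane meets the curve in at most
  \<open>d\<close> points, is determined by \<open>d\<close> of them, and its closed sides are the sign sets of that
  polynomial.

  If two continuous functions cut an interval into four sign quadrants of equal measure, all
  four sign patterns occur, so together they have at least three zeros there; with exactly
  three zeros the zeros sit at the quartiles and alternate between the two functions, one
  function vanishing at \<open>1/4\<close> and \<open>3/4\<close>, the other at \<open>1/2\<close>.

  Since \<open>H\<^sub>2\<close> contains \<open>0 = \<gamma>(0)\<close>, its polynomial has a root outside the arcs, so the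
  \<open>j\<close> arcs carry at most \<open>d + (d - 1) = 3 j\<close> zeros and every arc is of this extremal form.
  Let \<open>C\<close> be the set of arcs on which \<open>H\<^sub>1\<close> meets the curve twice; counting roots gives
  \<open>2 |C| = j + 1\<close>, and both hyperplanes are determined by \<open>C\<close>. Conversely, for every such
  \<open>C\<close> the hyperplanes through the prescribed points equipartition the arcs, because the sign
  of \<open>\<Prod>(t - r)\<close> is the parity of the number of roots \<open>r > t\<close>. So the pairs correspond
  bijectively to the \<open>(j + 1) / 2\<close>-element sets of arcs.
\<close>

section \<open>Hyperplanes restricted to the moment curve\<close>

lemma lin_moment_curve: "lin d a (moment_curve d t) = (\<Sum>i<d. a i * t ^ Suc i)"
  by (simp add: lin_def moment_curve_def)

lemma moment_curve_in_Rn: "moment_curve d t \<in> Rn d"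
  by (simp add: Rn_def moment_curve_def)

lemma moment_curve_0: "moment_curve d 0 = (\<lambda>_. 0)"
  by (simp add: moment_curve_def fun_eq_iff)

lemma lin_cong: "(\<And>i. i < d \<Longrightarrow> a i = a' i) \<Longrightarrow> lin d a x = lin d a' x"
  by (simp add: lin_def)

lemma lin_scale: "lin d (\<lambda>i. c * a i) x = c * lin d a x"
  by (simp add: lin_def sum_distrib_left mult.assoc)

lemma lin_uminus: "lin d (\<lambda>i. - a i) x = - lin d a x"
  by (simp add: lin_def sum_negf)

definition hyperplane_poly :: "nat \<Rightarrow> (nat \<Rightarrow> real) \<Rightarrow> real \<Rightarrow> real poly" where
  "hyperplane_poly d a b = pCons (- b) (\<Sum>i<d. monom (a i) i)"

lemma poly_hyperplane_poly: "poly (hyperplane_poly d a b) t = lin d a (moment_curve d t) - b"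
  by (simp add: hyperplane_poly_def poly_sum poly_monom lin_moment_curve sum_distrib_left mult_ac)

lemma coeff_hyperplane_poly_Suc: "coeff (hyperplane_poly d a b) (Suc i) = (if i < d then a i else 0)"
  by (simp add: hyperplane_poly_def coeff_sum)

lemma coeff_hyperplane_poly_0: "coeff (hyperplane_poly d a b) 0 = - b"
  by (simp add: hyperplane_poly_def)

lemma degree_hyperplane_poly: "degree (hyperplane_poly d a b) \<le> d"
proof (rule degree_le, intro allI impI)
  fix n assume "d < n"
  then obtain i where "n = Suc i" "d \<le> i" by (cases n) auto
  then show "coeff (hyperplane_poly d a b) n = 0" by (simp add: coeff_hyperplane_poly_Suc)
qed

lemma hyperplane_poly_nonzero: "\<exists>i<d. a i \<noteq> 0 \<Longrightarrow> hyperplane_poly d a b \<noteq> 0"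
  by (metis coeff_0 coeff_hyperplane_poly_Suc)

definition curve_hyperplane :: "nat \<Rightarrow> real poly \<Rightarrow> (nat \<Rightarrow> real) set" where
  "curve_hyperplane d P = {x \<in> Rn d. lin d (\<lambda>i. coeff P (Suc i)) x = - coeff P 0}"

lemma poly_as_lin_moment_curve:
  fixes P :: "real poly"
  assumes "degree P \<le> d"
  shows "poly P t = coeff P 0 + lin d (\<lambda>i. coeff P (Suc i)) (moment_curve d t)"
proof -
  have "poly P t = (\<Sum>i\<le>d. coeff P i * t ^ i)"
    unfolding poly_altdef by (rule sum.mono_neutral_left) (use assms in \<open>auto simp: coeff_eq_0\<close>)
  also have "\<dots> = coeff P 0 + (\<Sum>i<d. coeff P (Suc i) * t ^ Suc i)"
    unfolding lessThan_Suc_atMost[symmetric] sum.lessThan_Suc_shift by simp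
  finally show ?thesis by (simp add: lin_moment_curve)
qed

lemma moment_curve_in_curve_hyperplane_iff:
  "degree P \<le> d \<Longrightarrow> moment_curve d t \<in> curve_hyperplane d P \<longleftrightarrow> poly P t = 0"
  by (auto simp: curve_hyperplane_def poly_as_lin_moment_curve moment_curve_in_Rn)

lemma curve_hyperplane_hyperplane_poly:
  "curve_hyperplane d (hyperplane_poly d a b) = {x \<in> Rn d. lin d a x = b}"
proof -
  have "lin d (\<lambda>i. coeff (hyperplane_poly d a b) (Suc i)) x = lin d a x" for x
    by (rule lin_cong) (simp add: coeff_hyperplane_poly_Suc)
  then show ?thesis by (simp add: curve_hyperplane_def coeff_hyperplane_poly_0)
qed

lemma curve_hyperplane_smult:
  assumes "c \<noteq> 0"
  shows "curve_hyperplane d (smult c P) = curve_hyperplane d P"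
proof -
  from assms have "c * L = - (c * k) \<longleftrightarrow> L = - k" for L k :: real
    by (metis mult_cancel_left mult_minus_right)
  then show ?thesis by (simp add: curve_hyperplane_def lin_scale)
qed

lemma affine_hyperplane_curve_hyperplane:
  assumes "degree P = d" "1 \<le> d"
  shows "affine_hyperplane d (curve_hyperplane d P)"
proof -
  have "coeff P (Suc (d - 1)) \<noteq> 0"
    using assms leading_coeff_0_iff[of P] by (cases "P = 0") auto
  then show ?thesis
    unfolding affine_hyperplane_def curve_hyperplane_def using assms(2)
    by (intro exI[of _ "\<lambda>i. coeff P (Suc i)"] exI[of _ "- coeff P 0"]) (auto intro!: exI[of _ "d - 1"])
qed

definition root_poly :: "'a::idom set \<Rightarrow> 'a poly" where
  "root_poly R = (\<Prod>r\<in>R. [:- r, 1:])"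

lemma poly_root_poly: "poly (root_poly R) t = (\<Prod>r\<in>R. t - r)"
  by (simp add: root_poly_def poly_prod)

lemma degree_root_poly: "finite R \<Longrightarrow> degree (root_poly R) = card R"
  by (simp add: root_poly_def degree_prod_eq_sum_degree)

lemma root_poly_nonzero: "root_poly R \<noteq> 0"
  by (cases "finite R") (auto simp: root_poly_def)

lemma root_poly_dvd:
  assumes "finite R" "\<And>r. r \<in> R \<Longrightarrow> poly p r = 0"
  shows "root_poly R dvd p"
  using assms
proof (induction R arbitrary: p rule: finite_induct)
  case empty
  then show ?case by (simp add: root_poly_def)
next
  case (insert x R)
  obtain q where q: "p = [:- x, 1:] * q"
    using insert.prems by (meson dvdE insertI1 poly_eq_0_iff_dvd)
  have "poly q r = 0" if "r \<in> R" for r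
    using insert.prems[of r] insert.hyps(2) that by (auto simp: q)
  then have "root_poly R dvd q" by (rule insert.IH)
  then have "[:- x, 1:] * root_poly R dvd [:- x, 1:] * q" by (rule mult_dvd_mono[OF dvd_refl])
  moreover have "root_poly (insert x R) = [:- x, 1:] * root_poly R"
    unfolding root_poly_def by (rule prod.insert[OF insert.hyps])
  ultimately show ?case by (simp only: q)
qed

lemma eq_smult_root_poly:
  assumes "p \<noteq> 0" "finite R" "degree p \<le> card R" "\<And>r. r \<in> R \<Longrightarrow> poly p r = 0"
  shows "\<exists>c. c \<noteq> 0 \<and> p = smult c (root_poly R)"
proof -
  obtain q where q: "p = root_poly R * q"
    using root_poly_dvd[OF assms(2,4)] by blast
  with assms(1) have "q \<noteq> 0" by auto
  with q assms(2,3) have "degree q = 0"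
    by (simp add: degree_mult_eq root_poly_nonzero degree_root_poly)
  define c where "c = coeff q 0"
  have "q = [:c:]" unfolding c_def using \<open>degree q = 0\<close> by (rule degree_0_id[symmetric])
  with q \<open>q \<noteq> 0\<close> have "c \<noteq> 0 \<and> p = smult c (root_poly R)" by simp
  then show ?thesis by blast
qed

definition root_hyperplane :: "nat \<Rightarrow> real set \<Rightarrow> (nat \<Rightarrow> real) set" where
  "root_hyperplane d R = curve_hyperplane d (root_poly R)"

lemma moment_curve_in_root_hyperplane_iff:
  "finite R \<Longrightarrow> card R = d \<Longrightarrow> moment_curve d t \<in> root_hyperplane d R \<longleftrightarrow> t \<in> R"
  by (simp add: root_hyperplane_def moment_curve_in_curve_hyperplane_iff degree_root_poly
      poly_root_poly)

lemma affine_hyperplane_root_hyperplane: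
  "finite R \<Longrightarrow> card R = d \<Longrightarrow> 1 \<le> d \<Longrightarrow> affine_hyperplane d (root_hyperplane d R)"
  by (simp add: root_hyperplane_def affine_hyperplane_curve_hyperplane degree_root_poly)

lemma root_hyperplane_inj:
  assumes "finite R" "finite R'" "card R = d" "card R' = d"
    and "root_hyperplane d R = root_hyperplane d R'"
  shows "R = R'"
  using moment_curve_in_root_hyperplane_iff[OF assms(1,3)]
    moment_curve_in_root_hyperplane_iff[OF assms(2,4)] assms(5) by blast

lemma hyperplane_poly_eq_smult_root_poly:
  assumes a: "\<exists>i<d. a i \<noteq> 0" and R: "finite R" "card R = d"
    and on_H: "\<And>r. r \<in> R \<Longrightarrow> moment_curve d r \<in> {x \<in> Rn d. lin d a x = b}"
  shows "\<exists>c. c \<noteq> 0 \<and> hyperplane_poly d a b = smult c (root_poly R)"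
proof (rule eq_smult_root_poly[OF hyperplane_poly_nonzero[OF a] R(1)])
  show "degree (hyperplane_poly d a b) \<le> card R"
    using degree_hyperplane_poly R(2) by simp
  show "poly (hyperplane_poly d a b) r = 0" if "r \<in> R" for r
    using on_H[OF that] by (simp add: poly_hyperplane_poly)
qed

lemma affine_hyperplane_eq_root_hyperplane:
  assumes "affine_hyperplane d H" "finite R" "card R = d"
    and "\<And>r. r \<in> R \<Longrightarrow> moment_curve d r \<in> H"
  shows "H = root_hyperplane d R"
proof -
  obtain a b where a: "\<exists>i<d. a i \<noteq> 0" and H: "H = {x \<in> Rn d. lin d a x = b}"
    using assms(1) unfolding affine_hyperplane_def by blast
  obtain c where "c \<noteq> 0" "hyperplane_poly d a b = smult c (root_poly R)"
    using hyperplane_poly_eq_smult_root_poly[OF a assms(2,3)] assms(4) H by blast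
  then show ?thesis
    by (metis H curve_hyperplane_hyperplane_poly curve_hyperplane_smult root_hyperplane_def)
qed

lemma closed_side_root_hyperplane:
  assumes S: "S \<in> closed_sides d (root_hyperplane d R)" and R: "finite R" "card R = d"
  shows "\<exists>c. c \<noteq> 0 \<and> (\<forall>t. moment_curve d t \<in> S \<longleftrightarrow> c * (\<Prod>r\<in>R. t - r) \<le> 0)"
proof -
  obtain a b where a: "\<exists>i<d. a i \<noteq> 0"
    and H: "root_hyperplane d R = {x \<in> Rn d. lin d a x = b}"
    and S: "S = {x \<in> Rn d. lin d a x \<le> b}"
    using S unfolding closed_sides_def by blast
  have "moment_curve d r \<in> {x \<in> Rn d. lin d a x = b}" if "r \<in> R" for r
    using that H moment_curve_in_root_hyperplane_iff[OF R] by blast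
  then obtain c where "c \<noteq> 0" and c: "hyperplane_poly d a b = smult c (root_poly R)"
    using hyperplane_poly_eq_smult_root_poly[OF a R] by blast
  have "moment_curve d t \<in> S \<longleftrightarrow> c * (\<Prod>r\<in>R. t - r) \<le> 0" for t
  proof -
    have "lin d a (moment_curve d t) - b = c * (\<Prod>r\<in>R. t - r)"
      using arg_cong[OF c, of "\<lambda>p. poly p t"] by (simp add: poly_hyperplane_poly poly_root_poly)
    then show ?thesis by (auto simp: S moment_curve_in_Rn)
  qed
  with \<open>c \<noteq> 0\<close> show ?thesis by blast
qed

lemma moment_curve_meets_hyperplane:
  assumes "affine_hyperplane d H"
  shows "finite {t. moment_curve d t \<in> H}" "card {t. moment_curve d t \<in> H} \<le> d"
proof -
  obtain a b where a: "\<exists>i<d. a i \<noteq> 0" and H: "H = {x \<in> Rn d. lin d a x = b}"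
    using assms unfolding affine_hyperplane_def by blast
  have T: "{t. moment_curve d t \<in> H} = {t. poly (hyperplane_poly d a b) t = 0}"
    by (simp add: H poly_hyperplane_poly moment_curve_in_Rn)
  show "finite {t. moment_curve d t \<in> H}"
    unfolding T by (rule poly_roots_finite[OF hyperplane_poly_nonzero[OF a]])
  show "card {t. moment_curve d t \<in> H} \<le> d"
    unfolding T using card_poly_roots_bound[OF hyperplane_poly_nonzero[OF a]]
      degree_hyperplane_poly order_trans by blast
qed

lemma half_spaces_closed_sides:
  assumes a: "\<exists>i<d. a i \<noteq> 0" and H: "H = {x \<in> Rn d. lin d a x = b}"
  shows "{x \<in> Rn d. lin d a x \<le> b} \<in> closed_sides d H"
    and "{x \<in> Rn d. b \<le> lin d a x} \<in> closed_sides d H"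
proof -
  show "{x \<in> Rn d. lin d a x \<le> b} \<in> closed_sides d H"
    unfolding closed_sides_def using a H by blast
  have "H = {x \<in> Rn d. lin d (\<lambda>i. - a i) x = - b}"
    "{x \<in> Rn d. b \<le> lin d a x} = {x \<in> Rn d. lin d (\<lambda>i. - a i) x \<le> - b}"
    using H by (auto simp: lin_uminus)
  moreover have "\<exists>i<d. - a i \<noteq> 0" using a by simp
  ultimately show "{x \<in> Rn d. b \<le> lin d a x} \<in> closed_sides d H"
    unfolding closed_sides_def by (intro CollectI exI[of _ "\<lambda>i. - a i"] exI[of _ "- b"]) simp
qed

lemma measure_lborel_finite: "finite (A :: real set) \<Longrightarrow> measure lborel A = 0"
  by (simp add: finite_imp_null_set_lborel measure_eq_0_null_sets)

lemma arc_mass_subset_hyperplane: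
  assumes "affine_hyperplane d H" "S \<subseteq> H"
  shows "arc_mass d i S = 0"
proof -
  have "{t \<in> {real i<..<real i + 1}. moment_curve d t \<in> S} \<subseteq> {t. moment_curve d t \<in> H}"
    using assms(2) by auto
  with moment_curve_meets_hyperplane(1)[OF assms(1)] show ?thesis
    unfolding arc_mass_def by (meson finite_subset measure_lborel_finite)
qed

section \<open>Two functions equipartitioning an interval\<close>

lemma measure_eq_Ioo_up_to_finite:
  fixes A Z :: "real set"
  assumes "finite Z" "a \<le> b" "A - Z = {a<..<b} - Z"
  shows "measure lborel A = b - a"
proof -
  have null: "A \<inter> Z \<in> null_sets lborel" "Z \<in> null_sets lborel"
    using assms(1) by (auto intro: finite_imp_null_set_lborel)
  have "A = ({a<..<b} - Z) \<union> (A \<inter> Z)" using assms(3) by blast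
  then have "measure lborel A = measure lborel ({a<..<b} - Z)"
    using measure_Un_null_set[OF _ null(1), of "{a<..<b} - Z"]
      borel_open[OF open_Diff[OF open_greaterThanLessThan finite_imp_closed[OF assms(1)]]]
    by simp
  also have "\<dots> = measure lborel {a<..<b}"
    using measure_Diff_null_set[OF _ null(2)] by simp
  finally show ?thesis using assms(2) by simp
qed

lemma continuous_sign_constant:
  fixes f :: "real \<Rightarrow> real"
  assumes f: "continuous_on {a<..<b} f" "\<And>t. t \<in> {a<..<b} \<Longrightarrow> f t \<noteq> 0"
    and xy: "x \<in> {a<..<b}" "y \<in> {a<..<b}"
  shows "0 < f x \<longleftrightarrow> 0 < f y"
proof -
  have ordered: "0 < f x \<longleftrightarrow> 0 < f y"
    if "x \<le> y" "x \<in> {a<..<b}" "y \<in> {a<..<b}" for x y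
  proof (rule ccontr)
    assume "(0 < f x) \<noteq> (0 < f y)"
    then have "f x \<le> 0 \<and> 0 \<le> f y \<or> f y \<le> 0 \<and> 0 \<le> f x" by auto
    moreover have "continuous_on {x..y} f"
      by (rule continuous_on_subset[OF f(1)]) (use that in auto)
    ultimately obtain t where "x \<le> t" "t \<le> y" "f t = 0"
      using IVT'[of f x 0 y] IVT2'[of f y 0 x] \<open>x \<le> y\<close> by blast
    with f(2) that show False by auto
  qed
  show ?thesis
  proof (cases "x \<le> y")
    case True
    with ordered xy show ?thesis by blast
  next
    case False
    with ordered[of y x] xy show ?thesis by simp
  qed
qed

lemma subset_of_card_le_2:
  fixes Z :: "real set"
  assumes "finite Z" "card Z \<le> 2" "Z \<subseteq> {lo<..<hi}" "lo < hi"
  obtains a b where "lo < a" "a < b" "b < hi" "Z \<subseteq> {a, b}"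
proof -
  have "card Z = 0 \<or> card Z = 1 \<or> card Z = 2" using assms(2) by auto
  then consider "Z = {}" | x where "Z = {x}" | x y where "Z = {x, y}" "x \<noteq> y"
    using assms(1) by (auto simp: card_1_singleton_iff card_2_iff)
  then show ?thesis
  proof cases
    case 1
    then show ?thesis using that[of "lo + (hi - lo) / 3" "lo + 2 * (hi - lo) / 3"] assms(4)
      by (auto simp: field_simps)
  next
    case (2 x)
    then have "lo < x" "x < hi" using assms(3) by auto
    then show ?thesis
      using that[of x "(x + hi) / 2"] that[of "(lo + x) / 2" x] 2 by (cases "x < (lo + hi) / 2") auto
  next
    case (3 x y)
    then show ?thesis using that[of "min x y" "max x y"] assms(3) by (auto simp: min_def max_def)
  qed
qed

lemma card_3_sorted:
  fixes Z :: "real set"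
  assumes "card Z = 3"
  obtains a b c where "a < b" "b < c" "Z = {a, b, c}"
proof -
  obtain x y z where Z: "Z = {x, y, z}" "x \<noteq> y" "y \<noteq> z" "x \<noteq> z"
    using assms unfolding card_3_iff by blast
  then have "x < y \<and> y < z \<or> x < z \<and> z < y \<or> y < x \<and> x < z \<or> y < z \<and> z < x
    \<or> z < x \<and> x < y \<or> z < y \<and> y < x" by linarith
  then show ?thesis using that Z(1) by (elim disjE) (metis, (metis insert_commute)+)
qed

lemma UNIV_bool_pair_not_subset_3: "\<not> (UNIV :: (bool \<times> bool) set) \<subseteq> {x, y, z}"
proof
  assume "UNIV \<subseteq> {x, y, z}"
  then have "card (UNIV :: (bool \<times> bool) set) \<le> card (set [x, y, z])" by (intro card_mono) auto
  also have "\<dots> \<le> 3" using card_length[of "[x, y, z]"] by simp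
  finally show False by simp
qed

lemma UNIV_bool_pair_subset_4_distinct:
  assumes "(UNIV :: (bool \<times> bool) set) \<subseteq> {w, x, y, z}"
  shows "distinct [w, x, y, z]"
proof (rule card_distinct)
  have "card (UNIV :: (bool \<times> bool) set) \<le> card (set [w, x, y, z])"
    using assms by (intro card_mono) auto
  then show "card (set [w, x, y, z]) = length [w, x, y, z]"
    using card_length[of "[w, x, y, z]"] by simp
qed

lemma alternating_crossings:
  fixes P0 P1 P2 P3 :: "bool \<times> bool"
  assumes "distinct [P0, P1, P2, P3]"
    and "F1 \<Longrightarrow> snd P0 = snd P1" "\<not> F1 \<Longrightarrow> fst P0 = fst P1"
    and "F2 \<Longrightarrow> snd P1 = snd P2" "\<not> F2 \<Longrightarrow> fst P1 = fst P2"
    and "F3 \<Longrightarrow> snd P2 = snd P3" "\<not> F3 \<Longrightarrow> fst P2 = fst P3"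
  shows "F3 = F1 \<and> F2 = (\<not> F1)"
  using assms by (cases P0; cases P1; cases P2; cases P3) auto

lemma partition_of_three:
  assumes "A \<union> B = {x, y, z}" "A \<inter> B = {}" "z \<in> A \<longleftrightarrow> x \<in> A" "y \<in> A \<longleftrightarrow> x \<notin> A"
  shows "A = {x, z} \<and> B = {y} \<or> A = {y} \<and> B = {x, z}"
proof (cases "x \<in> A")
  case True
  then have "A = {x, z} \<and> B = {y}" using assms by auto
  then show ?thesis ..
next
  case False
  then have "A = {y} \<and> B = {x, z}" using assms by auto
  then show ?thesis ..
qed

definition on_side :: "bool \<Rightarrow> real \<Rightarrow> bool" where
  "on_side p x \<longleftrightarrow> (if p then 0 \<le> x else x \<le> 0)"

definition quartile :: "real \<Rightarrow> real \<Rightarrow> nat \<Rightarrow> real" where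
  "quartile lo hi k = lo + real k * (hi - lo) / 4"

lemma quartiles_ordered:
  assumes "lo < hi"
  shows "lo < quartile lo hi 1" "quartile lo hi 1 < quartile lo hi 2"
    "quartile lo hi 2 < quartile lo hi 3" "quartile lo hi 3 < hi"
  using assms by (simp_all add: quartile_def field_simps)

lemma quartile_in_interval:
  assumes "lo < hi" "0 < k" "k < 4"
  shows "quartile lo hi k \<in> {lo<..<hi}"
proof -
  have "0 < real k * (hi - lo)" "real k * (hi - lo) < 4 * (hi - lo)"
    using assms by (simp, intro mult_strict_right_mono) auto
  then show ?thesis by (simp add: quartile_def)
qed

lemma quartile_eq_iff: "lo < hi \<Longrightarrow> quartile lo hi k = quartile lo hi k' \<longleftrightarrow> k = k'"
  by (auto simp: quartile_def)

locale equipartitioned_arc =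
  fixes f g :: "real \<Rightarrow> real" and lo hi :: real
  assumes lo_less_hi: "lo < hi"
    and continuous_f: "continuous_on {lo<..<hi} f"
    and continuous_g: "continuous_on {lo<..<hi} g"
    and finite_zeros_f: "finite {t \<in> {lo<..<hi}. f t = 0}"
    and finite_zeros_g: "finite {t \<in> {lo<..<hi}. g t = 0}"
    and measure_quadrant:
      "\<And>p q. measure lborel {t \<in> {lo<..<hi}. on_side p (f t) \<and> on_side q (g t)} = (hi - lo) / 4"
begin

abbreviation zeros_f where "zeros_f \<equiv> {t \<in> {lo<..<hi}. f t = 0}"

abbreviation zeros_g where "zeros_g \<equiv> {t \<in> {lo<..<hi}. g t = 0}"

definition zeros where "zeros = zeros_f \<union> zeros_g"

definition pattern where "pattern t = (0 < f t, 0 < g t)"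

lemma finite_zeros: "finite zeros"
  using finite_zeros_f finite_zeros_g by (simp add: zeros_def)

lemma zeros_subset: "zeros \<subseteq> {lo<..<hi}"
  by (auto simp: zeros_def)

lemma pattern_eq_on_gap:
  assumes gap: "lo \<le> a" "b \<le> hi" "{a<..<b} \<inter> zeros = {}"
    and xy: "x \<in> {a<..<b}" "y \<in> {a<..<b}"
  shows "pattern x = pattern y"
proof -
  have sub: "{a<..<b} \<subseteq> {lo<..<hi}" using gap(1,2) by auto
  have nonzero: "f t \<noteq> 0" "g t \<noteq> 0" if "t \<in> {a<..<b}" for t
    using that gap(3) sub unfolding zeros_def by blast+
  have "0 < f x \<longleftrightarrow> 0 < f y"
    using continuous_sign_constant[OF continuous_on_subset[OF continuous_f sub] nonzero(1) xy] .
  moreover have "0 < g x \<longleftrightarrow> 0 < g y"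
    using continuous_sign_constant[OF continuous_on_subset[OF continuous_g sub] nonzero(2) xy] .
  ultimately show ?thesis by (simp add: pattern_def)
qed

lemma on_side_iff_pattern:
  assumes "t \<in> {lo<..<hi} - zeros"
  shows "on_side p (f t) \<and> on_side q (g t) \<longleftrightarrow> pattern t = (p, q)"
  using assms by (auto simp: on_side_def pattern_def zeros_def)

lemma pattern_surj:
  assumes "finite F"
  shows "\<exists>t \<in> {lo<..<hi} - (zeros \<union> F). pattern t = pq"
proof (rule ccontr)
  assume none: "\<not> ?thesis"
  have "{t \<in> {lo<..<hi}. on_side (fst pq) (f t) \<and> on_side (snd pq) (g t)} \<subseteq> zeros \<union> F"
  proof
    fix t assume "t \<in> {t \<in> {lo<..<hi}. on_side (fst pq) (f t) \<and> on_side (snd pq) (g t)}"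
    with none on_side_iff_pattern[of t "fst pq" "snd pq"] show "t \<in> zeros \<union> F"
      by (cases "t \<in> zeros") auto
  qed
  then have "measure lborel {t \<in> {lo<..<hi}. on_side (fst pq) (f t) \<and> on_side (snd pq) (g t)} = 0"
    by (meson assms finite_UnI finite_subset finite_zeros measure_lborel_finite)
  then show False using measure_quadrant[of "fst pq" "snd pq"] lo_less_hi by simp
qed

lemma gap_length:
  assumes "lo \<le> a" "a \<le> b" "b \<le> hi"
    and "\<And>t. t \<in> {lo<..<hi} - zeros \<Longrightarrow> pattern t = (p, q) \<longleftrightarrow> t \<in> {a<..<b}"
  shows "b - a = (hi - lo) / 4"
proof -
  have "{t \<in> {lo<..<hi}. on_side p (f t) \<and> on_side q (g t)} - zeros = {a<..<b} - zeros"
  proof (intro equalityI subsetI)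
    fix t assume "t \<in> {t \<in> {lo<..<hi}. on_side p (f t) \<and> on_side q (g t)} - zeros"
    with assms(4) on_side_iff_pattern show "t \<in> {a<..<b} - zeros" by blast
  next
    fix t assume "t \<in> {a<..<b} - zeros"
    moreover from this assms(1,3) have "t \<in> {lo<..<hi}" by auto
    ultimately show "t \<in> {t \<in> {lo<..<hi}. on_side p (f t) \<and> on_side q (g t)} - zeros"
      using assms(4) on_side_iff_pattern by blast
  qed
  then show ?thesis
    using measure_quadrant[of p q] measure_eq_Ioo_up_to_finite[OF finite_zeros assms(2)] by simp
qed

lemma pattern_eq_midpoint:
  assumes "t \<in> {c<..<c'}" "lo \<le> c" "c' \<le> hi" "{c<..<c'} \<inter> zeros = {}"
  shows "pattern t = pattern ((c + c') / 2)"
  using assms by (intro pattern_eq_on_gap) auto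

lemma three_le_card_zeros: "3 \<le> card zeros"
proof (rule ccontr)
  assume "\<not> 3 \<le> card zeros"
  then have "card zeros \<le> 2" by simp
  then obtain a b where ab: "lo < a" "a < b" "b < hi" "zeros \<subseteq> {a, b}"
    using subset_of_card_le_2[OF finite_zeros _ zeros_subset lo_less_hi] by blast
  have "pattern t \<in> {pattern ((lo + a) / 2), pattern ((a + b) / 2), pattern ((b + hi) / 2)}"
    if "t \<in> {lo<..<hi} - (zeros \<union> {a, b})" for t
  proof -
    have "t \<in> {lo<..<a} \<or> t \<in> {a<..<b} \<or> t \<in> {b<..<hi}"
      using that by auto
    moreover have "{lo<..<a} \<inter> zeros = {}" "{a<..<b} \<inter> zeros = {}" "{b<..<hi} \<inter> zeros = {}"
      using ab by auto
    ultimately show ?thesis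
      using pattern_eq_midpoint[of t lo a] pattern_eq_midpoint[of t a b]
        pattern_eq_midpoint[of t b hi] ab(1-3) by auto
  qed
  moreover have "\<exists>t \<in> {lo<..<hi} - (zeros \<union> {a, b}). pattern t = pq" for pq
    using pattern_surj[of "{a, b}"] by simp
  ultimately have "UNIV \<subseteq> {pattern ((lo + a) / 2), pattern ((a + b) / 2), pattern ((b + hi) / 2)}"
    by (metis subsetI)
  with UNIV_bool_pair_not_subset_3 show False by (rule notE)
qed

lemma three_le_card_zeros_f_g: "3 \<le> card zeros_f + card zeros_g"
  using three_le_card_zeros card_Un_le[of zeros_f zeros_g] by (simp add: zeros_def)

lemma three_zeros_gap_patterns:
  assumes "card zeros = 3"
  obtains z1 z2 z3 P0 P1 P2 P3
  where "lo < z1" "z1 < z2" "z2 < z3" "z3 < hi" "zeros = {z1, z2, z3}"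
    and "distinct [P0, P1, P2, P3]"
    and "\<And>t. t \<in> {lo<..<z1} \<Longrightarrow> pattern t = P0" "\<And>t. t \<in> {z1<..<z2} \<Longrightarrow> pattern t = P1"
      "\<And>t. t \<in> {z2<..<z3} \<Longrightarrow> pattern t = P2" "\<And>t. t \<in> {z3<..<hi} \<Longrightarrow> pattern t = P3"
proof -
  obtain z1 z2 z3 where z: "z1 < z2" "z2 < z3" and zeros: "zeros = {z1, z2, z3}"
    using card_3_sorted[OF assms] by blast
  with zeros_subset have bounds: "lo < z1" "z3 < hi" by auto
  define P0 where "P0 = pattern ((lo + z1) / 2)"
  define P1 where "P1 = pattern ((z1 + z2) / 2)"
  define P2 where "P2 = pattern ((z2 + z3) / 2)"
  define P3 where "P3 = pattern ((z3 + hi) / 2)"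
  have "{lo<..<z1} \<inter> zeros = {}" "{z1<..<z2} \<inter> zeros = {}" "{z2<..<z3} \<inter> zeros = {}"
    "{z3<..<hi} \<inter> zeros = {}"
    using z by (auto simp: zeros)
  then have on_gaps:
    "\<And>t. t \<in> {lo<..<z1} \<Longrightarrow> pattern t = P0" "\<And>t. t \<in> {z1<..<z2} \<Longrightarrow> pattern t = P1"
    "\<And>t. t \<in> {z2<..<z3} \<Longrightarrow> pattern t = P2" "\<And>t. t \<in> {z3<..<hi} \<Longrightarrow> pattern t = P3"
    unfolding P0_def P1_def P2_def P3_def using z bounds by (auto intro: pattern_eq_midpoint)
  have "pattern t \<in> {P0, P1, P2, P3}" if "t \<in> {lo<..<hi} - zeros" for t
  proof -
    have "t \<in> {lo<..<z1} \<or> t \<in> {z1<..<z2} \<or> t \<in> {z2<..<z3} \<or> t \<in> {z3<..<hi}"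
      using that by (auto simp: zeros)
    with on_gaps show ?thesis by blast
  qed
  moreover have "\<exists>t \<in> {lo<..<hi} - zeros. pattern t = pq" for pq
    using pattern_surj[of "{}"] by simp
  ultimately have "UNIV \<subseteq> {P0, P1, P2, P3}" by (metis subsetI)
  then have "distinct [P0, P1, P2, P3]" by (rule UNIV_bool_pair_subset_4_distinct)
  with that bounds z zeros on_gaps show thesis by blast
qed

lemma three_zeros_at_quartiles:
  assumes "card zeros = 3"
  obtains P0 P1 P2 P3
  where "zeros = {quartile lo hi 1, quartile lo hi 2, quartile lo hi 3}"
    and "distinct [P0, P1, P2, P3]"
    and "\<And>t. t \<in> {lo<..<quartile lo hi 1} \<Longrightarrow> pattern t = P0"
    and "\<And>t. t \<in> {quartile lo hi 1<..<quartile lo hi 2} \<Longrightarrow> pattern t = P1"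
    and "\<And>t. t \<in> {quartile lo hi 2<..<quartile lo hi 3} \<Longrightarrow> pattern t = P2"
    and "\<And>t. t \<in> {quartile lo hi 3<..<hi} \<Longrightarrow> pattern t = P3"
proof -
  obtain z1 z2 z3 P0 P1 P2 P3
    where z: "lo < z1" "z1 < z2" "z2 < z3" "z3 < hi" and zeros: "zeros = {z1, z2, z3}"
      and distinct: "distinct [P0, P1, P2, P3]"
      and on_gaps: "\<And>t. t \<in> {lo<..<z1} \<Longrightarrow> pattern t = P0" "\<And>t. t \<in> {z1<..<z2} \<Longrightarrow> pattern t = P1"
        "\<And>t. t \<in> {z2<..<z3} \<Longrightarrow> pattern t = P2" "\<And>t. t \<in> {z3<..<hi} \<Longrightarrow> pattern t = P3"
    using three_zeros_gap_patterns[OF assms] by metis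
  have classes: "(pattern t = P0 \<longleftrightarrow> t \<in> {lo<..<z1}) \<and> (pattern t = P1 \<longleftrightarrow> t \<in> {z1<..<z2})
      \<and> (pattern t = P2 \<longleftrightarrow> t \<in> {z2<..<z3})"
    if "t \<in> {lo<..<hi} - zeros" for t
  proof -
    have "t \<in> {lo<..<z1} \<or> t \<in> {z1<..<z2} \<or> t \<in> {z2<..<z3} \<or> t \<in> {z3<..<hi}"
      using that by (auto simp: zeros)
    with on_gaps[of t] distinct show ?thesis by auto
  qed
  have "z1 - lo = (hi - lo) / 4"
    by (rule gap_length[of lo z1 "fst P0" "snd P0"]) (use classes z in auto)
  moreover have "z2 - z1 = (hi - lo) / 4"
    by (rule gap_length[of z1 z2 "fst P1" "snd P1"]) (use classes z in auto)
  moreover have "z3 - z2 = (hi - lo) / 4"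
    by (rule gap_length[of z2 z3 "fst P2" "snd P2"]) (use classes z in auto)
  ultimately have "z1 = quartile lo hi 1" "z2 = quartile lo hi 2" "z3 = quartile lo hi 3"
    by (simp_all add: quartile_def field_simps)
  with that zeros distinct on_gaps z(4) show thesis by blast
qed

lemma pattern_across_zero:
  assumes disjoint: "zeros_f \<inter> zeros_g = {}"
    and abc: "lo \<le> a" "c \<le> hi" "{a<..<c} \<inter> zeros = {b}"
    and xy: "x \<in> {a<..<b}" "y \<in> {b<..<c}"
  shows "b \<in> zeros_f \<Longrightarrow> snd (pattern x) = snd (pattern y)"
    and "b \<notin> zeros_f \<Longrightarrow> fst (pattern x) = fst (pattern y)"
proof -
  have sub: "{a<..<c} \<subseteq> {lo<..<hi}" using abc(1,2) by auto
  have xy': "x \<in> {a<..<c}" "y \<in> {a<..<c}" using xy abc(3) by auto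
  show "snd (pattern x) = snd (pattern y)" if "b \<in> zeros_f"
  proof -
    have "g t \<noteq> 0" if "t \<in> {a<..<c}" for t
    proof
      assume "g t = 0"
      with that sub have "t \<in> zeros_g" by auto
      with that have "t \<in> {a<..<c} \<inter> zeros" by (simp add: zeros_def)
      with abc(3) have "t = b" by blast
      with \<open>t \<in> zeros_g\<close> \<open>b \<in> zeros_f\<close> disjoint show False by (metis IntI empty_iff)
    qed
    from continuous_sign_constant[OF continuous_on_subset[OF continuous_g sub] this xy']
    show ?thesis by (simp add: pattern_def)
  qed
  show "fst (pattern x) = fst (pattern y)" if "b \<notin> zeros_f"
  proof -
    have "f t \<noteq> 0" if "t \<in> {a<..<c}" for t
    proof
      assume "f t = 0"
      with that sub have "t \<in> zeros_f" by auto
      with that have "t \<in> {a<..<c} \<inter> zeros" by (simp add: zeros_def)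
      with abc(3) have "t = b" by blast
      with \<open>t \<in> zeros_f\<close> \<open>b \<notin> zeros_f\<close> show False by blast
    qed
    from continuous_sign_constant[OF continuous_on_subset[OF continuous_f sub] this xy']
    show ?thesis by (simp add: pattern_def)
  qed
qed

lemma zeros_alternate:
  assumes "card zeros_f + card zeros_g = 3"
  shows "zeros_f = {quartile lo hi 1, quartile lo hi 3} \<and> zeros_g = {quartile lo hi 2}
    \<or> zeros_f = {quartile lo hi 2} \<and> zeros_g = {quartile lo hi 1, quartile lo hi 3}"
proof -
  let ?q = "quartile lo hi"
  have "card zeros + card (zeros_f \<inter> zeros_g) = 3"
    using card_Un_Int[OF finite_zeros_f finite_zeros_g] assms by (simp add: zeros_def)
  with three_le_card_zeros have card: "card zeros = 3" and "card (zeros_f \<inter> zeros_g) = 0"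
    by auto
  with finite_zeros_f have disjoint: "zeros_f \<inter> zeros_g = {}" by simp
  obtain P0 P1 P2 P3 where zeros: "zeros = {?q 1, ?q 2, ?q 3}" and distinct: "distinct [P0, P1, P2, P3]"
    and on_gaps: "\<And>t. t \<in> {lo<..<?q 1} \<Longrightarrow> pattern t = P0"
      "\<And>t. t \<in> {?q 1<..<?q 2} \<Longrightarrow> pattern t = P1"
      "\<And>t. t \<in> {?q 2<..<?q 3} \<Longrightarrow> pattern t = P2"
      "\<And>t. t \<in> {?q 3<..<hi} \<Longrightarrow> pattern t = P3"
    using three_zeros_at_quartiles[OF card] by blast
  note q = quartiles_ordered[OF lo_less_hi]
  define m where "m k = lo + (2 * real k + 1) * (hi - lo) / 8" for k :: nat
  have m: "m 0 \<in> {lo<..<?q 1}" "m 1 \<in> {?q 1<..<?q 2}" "m 2 \<in> {?q 2<..<?q 3}" "m 3 \<in> {?q 3<..<hi}"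
    using lo_less_hi by (simp_all add: m_def quartile_def field_simps)
  have "{lo<..<?q 2} \<inter> zeros = {?q 1}" "{?q 1<..<?q 3} \<inter> zeros = {?q 2}"
    "{?q 2<..<hi} \<inter> zeros = {?q 3}"
    using q by (auto simp: zeros)
  note across = pattern_across_zero[OF disjoint _ _ this(1)] pattern_across_zero[OF disjoint _ _ this(2)]
    pattern_across_zero[OF disjoint _ _ this(3)]
  have alternate: "(?q 3 \<in> zeros_f) = (?q 1 \<in> zeros_f) \<and> (?q 2 \<in> zeros_f) = (?q 1 \<notin> zeros_f)"
  proof (rule alternating_crossings[OF distinct])
    show "?q 1 \<in> zeros_f \<Longrightarrow> snd P0 = snd P1" "?q 1 \<notin> zeros_f \<Longrightarrow> fst P0 = fst P1"
      using across(1,2)[OF order_refl _ m(1,2)] q on_gaps(1)[OF m(1)] on_gaps(2)[OF m(2)] by simp_all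
    show "?q 2 \<in> zeros_f \<Longrightarrow> snd P1 = snd P2" "?q 2 \<notin> zeros_f \<Longrightarrow> fst P1 = fst P2"
      using across(3,4)[OF _ _ m(2,3)] q on_gaps(2)[OF m(2)] on_gaps(3)[OF m(3)] by simp_all
    show "?q 3 \<in> zeros_f \<Longrightarrow> snd P2 = snd P3" "?q 3 \<notin> zeros_f \<Longrightarrow> fst P2 = fst P3"
      using across(5,6)[OF _ order_refl m(3,4)] q on_gaps(3)[OF m(3)] on_gaps(4)[OF m(4)] by simp_all
  qed
  have "zeros_f \<union> zeros_g = {?q 1, ?q 2, ?q 3}" using zeros by (simp add: zeros_def)
  from partition_of_three[OF this disjoint conjunct1[OF alternate] conjunct2[OF alternate]]
  show ?thesis .
qed

end

section \<open>Products of linear factors on an interval\<close>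

lemma prod_diff_neg_iff:
  fixes R :: "real set"
  assumes "finite R" "t \<notin> R"
  shows "(\<Prod>r\<in>R. t - r) < 0 \<longleftrightarrow> odd (card {r \<in> R. t < r})"
  using assms
proof (induction R rule: finite_induct)
  case empty
  then show ?case by simp
next
  case (insert x R)
  have IH: "(\<Prod>r\<in>R. t - r) < 0 \<longleftrightarrow> odd (card {r \<in> R. t < r})" "(\<Prod>r\<in>R. t - r) \<noteq> 0"
    using insert by simp_all
  have prod: "(\<Prod>r\<in>insert x R. t - r) = (t - x) * (\<Prod>r\<in>R. t - r)"
    using insert.hyps by simp
  show ?case
  proof (cases "t < x")
    case True
    then have "{r \<in> insert x R. t < r} = insert x {r \<in> R. t < r}" by auto
    then have "card {r \<in> insert x R. t < r} = Suc (card {r \<in> R. t < r})"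
      using insert.hyps by simp
    with True IH show ?thesis unfolding prod by (auto simp: mult_less_0_iff)
  next
    case False
    then have "{r \<in> insert x R. t < r} = {r \<in> R. t < r}" by auto
    moreover have "x < t" using False insert.prems by auto
    ultimately show ?thesis using IH unfolding prod by (auto simp: mult_less_0_iff)
  qed
qed

lemma card_greater_split:
  fixes R :: "real set"
  assumes "finite R" "t \<in> {lo<..<hi}"
  shows "card {r \<in> R. t < r} = card {r \<in> R. hi \<le> r} + card {r \<in> R \<inter> {lo<..<hi}. t < r}"
proof -
  have "{r \<in> R. t < r} = {r \<in> R. hi \<le> r} \<union> {r \<in> R \<inter> {lo<..<hi}. t < r}"
    using assms(2) by auto
  moreover have "{r \<in> R. hi \<le> r} \<inter> {r \<in> R \<inter> {lo<..<hi}. t < r} = {}" by auto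
  ultimately show ?thesis using assms(1) by (simp add: card_Un_disjoint)
qed

lemma prod_diff_neg_iff_on_interval:
  fixes R :: "real set"
  assumes "finite R" "t \<in> {lo<..<hi}" "t \<notin> R"
  shows "(\<Prod>r\<in>R. t - r) < 0 \<longleftrightarrow> odd (card {r \<in> R. hi \<le> r}) \<noteq> odd (card {r \<in> R \<inter> {lo<..<hi}. t < r})"
  using prod_diff_neg_iff[OF assms(1,3)] card_greater_split[OF assms(1,2)] by simp

lemma odd_card_greater_2:
  fixes a b t :: real
  assumes "a < b" "t \<noteq> a" "t \<noteq> b"
  shows "odd (card {r \<in> {a, b}. t < r}) \<longleftrightarrow> a < t \<and> t < b"
proof -
  have "{r \<in> {a, b}. t < r} = (if t < a then {a, b} else if t < b then {b} else {})"
    using assms by auto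
  then show ?thesis using assms by auto
qed

lemma odd_card_greater_1: "odd (card {r \<in> {a}. t < r}) \<longleftrightarrow> t < (a :: real)"
  by (cases "t < a") (auto simp: Collect_conv_if)

lemma mult_nonpos_iff_signs:
  fixes c x :: real
  assumes "c \<noteq> 0" "x \<noteq> 0"
  shows "c * x \<le> 0 \<longleftrightarrow> (0 < c \<longleftrightarrow> x < 0)"
  using assms by (auto simp: mult_le_0_iff)

lemma gap_of_two_conditions:
  fixes q0 q1 q2 q3 q4 :: real
  assumes "q0 < q1" "q1 < q2" "q2 < q3" "q3 < q4"
  obtains a b where "(a, b) \<in> {(q0, q1), (q1, q2), (q2, q3), (q3, q4)}"
    and "\<And>t. t \<in> {q0<..<q4} - {q1, q2, q3} \<Longrightarrow>
      ((q1 < t \<and> t < q3) = x \<and> (t < q2) = y) \<longleftrightarrow> t \<in> {a<..<b}"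
proof (cases x; cases y)
  assume "x" "y" then show thesis by (intro that[of q1 q2]) (use assms in auto)
next
  assume "x" "\<not> y" then show thesis by (intro that[of q2 q3]) (use assms in auto)
next
  assume "\<not> x" "y" then show thesis by (intro that[of q0 q1]) (use assms in auto)
next
  assume "\<not> x" "\<not> y" then show thesis by (intro that[of q3 q4]) (use assms in auto)
qed

lemma quadrant_signs_alternating_roots:
  fixes R S :: "real set"
  assumes fin: "finite R" "finite S" and "lo < hi"
    and R: "R \<inter> {lo<..<hi} = {quartile lo hi 1, quartile lo hi 3}"
    and S: "S \<inter> {lo<..<hi} = {quartile lo hi 2}"
    and c: "c \<noteq> 0" "c' \<noteq> 0"
    and t: "t \<in> {lo<..<hi} - {quartile lo hi 1, quartile lo hi 2, quartile lo hi 3}"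
  shows "c * (\<Prod>r\<in>R. t - r) \<le> 0 \<and> c' * (\<Prod>r\<in>S. t - r) \<le> 0 \<longleftrightarrow>
    (quartile lo hi 1 < t \<and> t < quartile lo hi 3) = ((0 < c) \<noteq> odd (card {r \<in> R. hi \<le> r}))
    \<and> (t < quartile lo hi 2) = ((0 < c') \<noteq> odd (card {r \<in> S. hi \<le> r}))"
proof -
  have "t \<notin> R \<inter> {lo<..<hi}" "t \<notin> S \<inter> {lo<..<hi}" using t by (simp_all add: R S)
  with t have "t \<notin> R" "t \<notin> S" by auto
  then have "(\<Prod>r\<in>R. t - r) \<noteq> 0" "(\<Prod>r\<in>S. t - r) \<noteq> 0"
    using fin by simp_all
  moreover have "quartile lo hi 1 < quartile lo hi 3"
    using \<open>lo < hi\<close> by (simp add: quartile_def field_simps)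
  then have "odd (card {r \<in> R \<inter> {lo<..<hi}. t < r}) \<longleftrightarrow> quartile lo hi 1 < t \<and> t < quartile lo hi 3"
    unfolding R using t by (intro odd_card_greater_2) auto
  moreover have "odd (card {r \<in> S \<inter> {lo<..<hi}. t < r}) \<longleftrightarrow> t < quartile lo hi 2"
    unfolding S by (rule odd_card_greater_1)
  ultimately show ?thesis
    using t \<open>t \<notin> R\<close> \<open>t \<notin> S\<close> c fin
      prod_diff_neg_iff_on_interval[of R t lo hi] prod_diff_neg_iff_on_interval[of S t lo hi]
    by (auto simp: mult_nonpos_iff_signs)
qed

lemma measure_quadrant_alternating_roots:
  fixes R S :: "real set"
  assumes fin: "finite R" "finite S" and "lo < hi"
    and R: "R \<inter> {lo<..<hi} = {quartile lo hi 1, quartile lo hi 3}"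
    and S: "S \<inter> {lo<..<hi} = {quartile lo hi 2}"
    and c: "c \<noteq> 0" "c' \<noteq> 0"
  shows "measure lborel {t \<in> {lo<..<hi}. c * (\<Prod>r\<in>R. t - r) \<le> 0 \<and> c' * (\<Prod>r\<in>S. t - r) \<le> 0}
    = (hi - lo) / 4"
proof -
  let ?q = "quartile lo hi"
  define Q where "Q = {?q 1, ?q 2, ?q 3}"
  define A where
    "A = {t \<in> {lo<..<hi}. c * (\<Prod>r\<in>R. t - r) \<le> 0 \<and> c' * (\<Prod>r\<in>S. t - r) \<le> 0}"
  have q: "lo < ?q 1" "?q 1 < ?q 2" "?q 2 < ?q 3" "?q 3 < hi"
    using \<open>lo < hi\<close> by (simp_all add: quartile_def field_simps)
  obtain a b where ab: "(a, b) \<in> {(lo, ?q 1), (?q 1, ?q 2), (?q 2, ?q 3), (?q 3, hi)}"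
    and gap: "\<And>t. t \<in> {lo<..<hi} - Q \<Longrightarrow> t \<in> A \<longleftrightarrow> t \<in> {a<..<b}"
    using gap_of_two_conditions[OF q] quadrant_signs_alternating_roots[OF assms]
    unfolding A_def Q_def by (metis (no_types, lifting) Diff_iff mem_Collect_eq)
  have ab_bounds: "b - a = (hi - lo) / 4" "a \<le> b" "lo \<le> a" "b \<le> hi"
    using ab q by (auto simp: quartile_def field_simps)
  have "A - Q = {a<..<b} - Q"
  proof (rule set_eqI)
    fix t
    show "t \<in> A - Q \<longleftrightarrow> t \<in> {a<..<b} - Q"
      using gap[of t] ab_bounds(3,4) by (cases "t \<in> {lo<..<hi}") (auto simp: A_def)
  qed
  with ab_bounds show ?thesis
    using measure_eq_Ioo_up_to_finite[of Q a b A] by (simp add: A_def Q_def)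
qed

section \<open>Roots on the unit arcs\<close>

lemma card_UN_unit_intervals:
  fixes Z :: "nat \<Rightarrow> real set"
  assumes "finite A" "\<And>i. finite (Z i)" "\<And>i. Z i \<subseteq> {real i<..<real i + 1}"
  shows "card (\<Union>i\<in>A. Z i) = (\<Sum>i\<in>A. card (Z i))"
proof (rule card_UN_disjoint[OF assms(1)])
  show "\<forall>i\<in>A. finite (Z i)" using assms(2) by blast
  show "\<forall>i\<in>A. \<forall>i'\<in>A. i \<noteq> i' \<longrightarrow> Z i \<inter> Z i' = {}"
  proof (intro ballI impI)
    fix i i' :: nat assume "i \<noteq> i'"
    have "real i < t" "t < real i + 1" "real i' < t" "t < real i' + 1" if "t \<in> Z i" "t \<in> Z i'" for t
      using that assms(3)[of i] assms(3)[of i'] by auto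
    with \<open>i \<noteq> i'\<close> show "Z i \<inter> Z i' = {}" by fastforce
  qed
qed

definition arc_roots :: "nat set \<Rightarrow> nat \<Rightarrow> real set" where
  "arc_roots C i = (if i \<in> C then {quartile (real i) (real i + 1) 1, quartile (real i) (real i + 1) 3}
    else {quartile (real i) (real i + 1) 2})"

definition curve_roots :: "nat \<Rightarrow> nat set \<Rightarrow> real set" where
  "curve_roots j C = (\<Union>i\<in>{1..j}. arc_roots C i)"

lemma arc_roots_subset: "arc_roots C i \<subseteq> {real i<..<real i + 1}"
  using quartile_in_interval[of "real i" "real i + 1"] by (auto simp: arc_roots_def)

lemma finite_arc_roots: "finite (arc_roots C i)"
  by (simp add: arc_roots_def)

lemma card_arc_roots: "card (arc_roots C i) = (if i \<in> C then 2 else 1)"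
  by (simp add: arc_roots_def quartile_eq_iff)

lemma finite_curve_roots: "finite (curve_roots j C)"
  by (simp add: curve_roots_def finite_arc_roots)

lemma card_curve_roots: "card (curve_roots j C) = j + card (C \<inter> {1..j})"
proof -
  have "card (curve_roots j C) = (\<Sum>i\<in>{1..j}. if i \<in> C then 2 else 1)"
    unfolding curve_roots_def card_arc_roots[symmetric]
    by (rule card_UN_unit_intervals[OF _ finite_arc_roots arc_roots_subset]) simp
  also have "\<dots> = (\<Sum>i\<in>{1..j}. 1 + of_bool (i \<in> C))"
    by (intro sum.cong) auto
  also have "\<dots> = j + card (C \<inter> {1..j})"
    by (subst sum.distrib) (simp add: Int_commute)
  finally show ?thesis .
qed

lemma curve_roots_inter_arc:
  assumes "i \<in> {1..j}"
  shows "curve_roots j C \<inter> {real i<..<real i + 1} = arc_roots C i"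
proof -
  have "arc_roots C i' \<inter> {real i<..<real i + 1} = {}" if "i' \<noteq> i" for i'
    using arc_roots_subset[of C i'] that by fastforce
  then have "x \<in> arc_roots C i" if "i' \<in> {1..j}" "x \<in> arc_roots C i'" "x \<in> {real i<..<real i + 1}" for i' x
    using that by (cases "i' = i") blast+
  then show ?thesis
    using assms arc_roots_subset[of C i] by (auto simp: curve_roots_def)
qed

lemma zero_notin_curve_roots: "0 \<notin> curve_roots j C"
  using arc_roots_subset by (fastforce simp: curve_roots_def)

lemma curve_roots_inj:
  assumes "C \<subseteq> {1..j}" "C' \<subseteq> {1..j}" "curve_roots j C = curve_roots j C'"
  shows "C = C'"
proof -
  have "i \<in> C \<longleftrightarrow> quartile (real i) (real i + 1) 1 \<in> curve_roots j C" if "i \<in> {1..j}" for i C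
  proof -
    let ?q = "quartile (real i) (real i + 1)"
    have "?q 1 \<in> arc_roots C i \<longleftrightarrow> i \<in> C"
      by (simp add: arc_roots_def quartile_def)
    moreover have "?q 1 \<in> {real i<..<real i + 1}"
      by (rule quartile_in_interval) auto
    ultimately show ?thesis
      using curve_roots_inter_arc[OF that, of C] by blast
  qed
  with assms show ?thesis by blast
qed

lemma card_curve_roots_pair:
  assumes "C \<subseteq> {1..j}"
  shows "card (curve_roots j C) = j + card C"
    and "card (insert 0 (curve_roots j (- C))) + card C = 2 * j + 1"
proof -
  have CI: "C \<inter> {1..j} = C" using assms by blast
  then show "card (curve_roots j C) = j + card C" by (simp add: card_curve_roots)
  have "card (- C \<inter> {1..j}) + card C = j"
    using card_Int_Diff[of "{1..j}" C] CI by (simp add: Diff_eq Int_commute)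
  then show "card (insert 0 (curve_roots j (- C))) + card C = 2 * j + 1"
    by (simp add: finite_curve_roots zero_notin_curve_roots card_curve_roots)
qed

definition equipartition_pair :: "nat \<Rightarrow> nat \<Rightarrow> nat set \<Rightarrow> (nat \<Rightarrow> real) set \<times> (nat \<Rightarrow> real) set" where
  "equipartition_pair d j C =
    (root_hyperplane d (curve_roots j C), root_hyperplane d (insert 0 (curve_roots j (- C))))"

section \<open>Necessity\<close>

lemma closed_side_on_side:
  assumes "\<exists>i<d. a i \<noteq> 0" "H = {x \<in> Rn d. lin d a x = b}"
  obtains S where "S \<in> closed_sides d H"
    and "\<And>t. moment_curve d t \<in> S \<longleftrightarrow> on_side p (lin d a (moment_curve d t) - b)"
proof (cases p)
  case True
  with half_spaces_closed_sides(2)[OF assms] show thesis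
    by (intro that) (auto simp: on_side_def moment_curve_in_Rn)
next
  case False
  with half_spaces_closed_sides(1)[OF assms] show thesis
    by (intro that) (auto simp: on_side_def moment_curve_in_Rn)
qed

lemma equiparts_arc:
  assumes a1: "\<exists>i<d. a1 i \<noteq> 0" "H1 = {x \<in> Rn d. lin d a1 x = b1}"
    and a2: "\<exists>i<d. a2 i \<noteq> 0" "H2 = {x \<in> Rn d. lin d a2 x = b2}"
    and equi: "equiparts d j H1 H2" and i: "i \<in> {1..j}"
  shows "equipartitioned_arc (\<lambda>t. lin d a1 (moment_curve d t) - b1)
    (\<lambda>t. lin d a2 (moment_curve d t) - b2) (real i) (real i + 1)"
proof -
  have continuous: "continuous_on {real i<..<real i + 1} (\<lambda>t. lin d a (moment_curve d t) - b)"
    for a b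
    unfolding lin_moment_curve by (intro continuous_intros)
  have finite: "finite {t \<in> {real i<..<real i + 1}. lin d a (moment_curve d t) - b = 0}"
    if "\<exists>i<d. a i \<noteq> 0" for a b
    using poly_roots_finite[OF hyperplane_poly_nonzero[OF that, of b]]
    by (rule rev_finite_subset) (auto simp: poly_hyperplane_poly)
  have quadrant: "measure lborel {t \<in> {real i<..<real i + 1}.
      on_side p (lin d a1 (moment_curve d t) - b1) \<and> on_side q (lin d a2 (moment_curve d t) - b2)}
      = (real i + 1 - real i) / 4" for p q
  proof -
    obtain S1 where S1: "S1 \<in> closed_sides d H1"
      "\<And>t. moment_curve d t \<in> S1 \<longleftrightarrow> on_side p (lin d a1 (moment_curve d t) - b1)"
      using closed_side_on_side[OF a1] by blast
    obtain S2 where S2: "S2 \<in> closed_sides d H2"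
      "\<And>t. moment_curve d t \<in> S2 \<longleftrightarrow> on_side q (lin d a2 (moment_curve d t) - b2)"
      using closed_side_on_side[OF a2] by blast
    have "arc_mass d i (S1 \<inter> S2) = 1 / 4"
      using equi S1(1) S2(1) i unfolding equiparts_def by blast
    then show ?thesis by (simp add: arc_mass_def S1(2) S2(2))
  qed
  show ?thesis
    by unfold_locales (use continuous finite[OF a1(1)] finite[OF a2(1)] quadrant in simp_all)
qed

lemma equiparts_arc_configuration:
  assumes H: "affine_hyperplane d H1" "affine_hyperplane d H2" and equi: "equiparts d j H1 H2"
    and i: "i \<in> {1..j}"
  defines "Z1 \<equiv> {t \<in> {real i<..<real i + 1}. moment_curve d t \<in> H1}"
    and "Z2 \<equiv> {t \<in> {real i<..<real i + 1}. moment_curve d t \<in> H2}"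
    and "q \<equiv> quartile (real i) (real i + 1)"
  shows "3 \<le> card Z1 + card Z2"
    and "card Z1 + card Z2 = 3 \<Longrightarrow> Z1 = {q 1, q 3} \<and> Z2 = {q 2} \<or> Z1 = {q 2} \<and> Z2 = {q 1, q 3}"
proof -
  obtain a1 b1 where a1: "\<exists>i<d. a1 i \<noteq> 0" "H1 = {x \<in> Rn d. lin d a1 x = b1}"
    using H(1) unfolding affine_hyperplane_def by blast
  obtain a2 b2 where a2: "\<exists>i<d. a2 i \<noteq> 0" "H2 = {x \<in> Rn d. lin d a2 x = b2}"
    using H(2) unfolding affine_hyperplane_def by blast
  interpret equipartitioned_arc "\<lambda>t. lin d a1 (moment_curve d t) - b1"
    "\<lambda>t. lin d a2 (moment_curve d t) - b2" "real i" "real i + 1"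
    by (rule equiparts_arc[OF a1 a2 equi i])
  have "Z1 = zeros_f" "Z2 = zeros_g"
    by (auto simp: Z1_def Z2_def a1(2) a2(2) moment_curve_in_Rn)
  then show "3 \<le> card Z1 + card Z2"
    and "card Z1 + card Z2 = 3 \<Longrightarrow> Z1 = {q 1, q 3} \<and> Z2 = {q 2} \<or> Z1 = {q 2} \<and> Z2 = {q 1, q 3}"
    using three_le_card_zeros_f_g zeros_alternate by (simp_all add: q_def)
qed

lemma all_eq_if_sum_le:
  fixes x :: "'a \<Rightarrow> nat"
  assumes "finite A" "\<And>i. i \<in> A \<Longrightarrow> k \<le> x i" "(\<Sum>i\<in>A. x i) \<le> card A * k" "i \<in> A"
  shows "x i = k"
proof (rule ccontr)
  assume "x i \<noteq> k"
  with assms(2,4) have "k < x i" by fastforce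
  with assms have "(\<Sum>i\<in>A. k) < (\<Sum>i\<in>A. x i)"
    by (intro sum_strict_mono_ex1) auto
  with assms(3) show False by simp
qed

lemma sum_card_arcs_le:
  assumes "affine_hyperplane d H" "finite A"
  shows "(\<Sum>i\<in>A. card {t \<in> {real i<..<real i + 1}. moment_curve d t \<in> H})
    \<le> card ({t. moment_curve d t \<in> H} - {0})"
proof -
  note T = moment_curve_meets_hyperplane[OF assms(1)]
  have "(\<Sum>i\<in>A. card {t \<in> {real i<..<real i + 1}. moment_curve d t \<in> H})
      = card (\<Union>i\<in>A. {t \<in> {real i<..<real i + 1}. moment_curve d t \<in> H})"
    by (rule card_UN_unit_intervals[symmetric]) (auto intro: rev_finite_subset[OF T(1)] assms(2))
  also have "\<dots> \<le> card ({t. moment_curve d t \<in> H} - {0})"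
    by (rule card_mono) (use T(1) in auto)
  finally show ?thesis .
qed

lemma arc_roots_of_configuration:
  fixes Z1 Z2 :: "real set" and i :: nat
  defines "q \<equiv> quartile (real i) (real i + 1)"
  assumes "Z1 = {q 1, q 3} \<and> Z2 = {q 2} \<or> Z1 = {q 2} \<and> Z2 = {q 1, q 3}"
    and "i \<in> C \<longleftrightarrow> card Z1 = 2"
  shows "Z1 = arc_roots C i \<and> Z2 = arc_roots (- C) i"
proof -
  have "q 1 \<noteq> q 3" by (simp add: q_def quartile_def)
  with assms(2,3) show ?thesis by (auto simp: arc_roots_def q_def)
qed

lemma equiparts_arc_roots:
  assumes j: "2 * d = 3 * j + 1"
    and H: "affine_hyperplane d H1" "affine_hyperplane d H2" "equiparts d j H1 H2" "(\<lambda>_. 0) \<in> H2"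
  obtains C where "C \<subseteq> {1..j}"
    and "\<And>i. i \<in> {1..j} \<Longrightarrow> {t \<in> {real i<..<real i + 1}. moment_curve d t \<in> H1} = arc_roots C i"
    and "\<And>i. i \<in> {1..j} \<Longrightarrow> {t \<in> {real i<..<real i + 1}. moment_curve d t \<in> H2} = arc_roots (- C) i"
proof -
  define Z1 where "Z1 i = {t \<in> {real i<..<real i + 1}. moment_curve d t \<in> H1}" for i
  define Z2 where "Z2 i = {t \<in> {real i<..<real i + 1}. moment_curve d t \<in> H2}" for i
  note T1 = moment_curve_meets_hyperplane[OF H(1)] and T2 = moment_curve_meets_hyperplane[OF H(2)]
  have "0 \<in> {t. moment_curve d t \<in> H2}" using H(4) by (simp add: moment_curve_0)
  then have "(\<Sum>i\<in>{1..j}. card (Z2 i)) \<le> d - 1"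
    using sum_card_arcs_le[OF H(2), of "{1..j}"] T2 by (simp add: Z2_def)
  moreover have "(\<Sum>i\<in>{1..j}. card (Z1 i)) \<le> d"
    using sum_card_arcs_le[OF H(1), of "{1..j}"] card_Diff1_le[of "{t. moment_curve d t \<in> H1}" 0] T1(2)
    by (simp add: Z1_def)
  ultimately have "(\<Sum>i\<in>{1..j}. card (Z1 i) + card (Z2 i)) \<le> card {1..j} * 3"
    using j by (simp add: sum.distrib)
  then have three: "card (Z1 i) + card (Z2 i) = 3" if "i \<in> {1..j}" for i
    using equiparts_arc_configuration(1)[OF H(1-3)] that
    by (intro all_eq_if_sum_le[of "{1..j}"]) (simp_all add: Z1_def Z2_def)
  define C where "C = {i \<in> {1..j}. card (Z1 i) = 2}"
  have "Z1 i = arc_roots C i \<and> Z2 i = arc_roots (- C) i" if "i \<in> {1..j}" for i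
    using equiparts_arc_configuration(2)[OF H(1-3) that] three[OF that] that
    by (intro arc_roots_of_configuration) (auto simp: Z1_def Z2_def C_def)
  moreover have "C \<subseteq> {1..j}" by (auto simp: C_def)
  ultimately show thesis
    using that unfolding Z1_def Z2_def by blast
qed

lemma equipartition_necessary:
  assumes j: "2 * d = 3 * j + 1"
    and H: "affine_hyperplane d H1" "affine_hyperplane d H2" "equiparts d j H1 H2" "(\<lambda>_. 0) \<in> H2"
  obtains C where "C \<subseteq> {1..j}" "2 * card C = j + 1" "(H1, H2) = equipartition_pair d j C"
proof -
  obtain C where C: "C \<subseteq> {1..j}"
    and arcs: "\<And>i. i \<in> {1..j} \<Longrightarrow> {t \<in> {real i<..<real i + 1}. moment_curve d t \<in> H1} = arc_roots C i"
      "\<And>i. i \<in> {1..j} \<Longrightarrow> {t \<in> {real i<..<real i + 1}. moment_curve d t \<in> H2} = arc_roots (- C) i"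
    using equiparts_arc_roots[OF assms] by blast
  note T1 = moment_curve_meets_hyperplane[OF H(1)] and T2 = moment_curve_meets_hyperplane[OF H(2)]
  have roots1: "curve_roots j C \<subseteq> {t. moment_curve d t \<in> H1}"
    using arcs(1) by (auto simp: curve_roots_def simp flip: arcs(1))
  have roots2: "insert 0 (curve_roots j (- C)) \<subseteq> {t. moment_curve d t \<in> H2}"
    using arcs(2) H(4) by (auto simp: curve_roots_def moment_curve_0 simp flip: arcs(2))
  have "card (curve_roots j C) \<le> d" "card (insert 0 (curve_roots j (- C))) \<le> d"
    using card_mono[OF T1(1) roots1] card_mono[OF T2(1) roots2] T1(2) T2(2) by linarith+
  with card_curve_roots_pair[OF C] j
  have card_C: "2 * card C = j + 1" and card_roots: "card (curve_roots j C) = d"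
    "card (insert 0 (curve_roots j (- C))) = d"
    by linarith+
  have "H1 = root_hyperplane d (curve_roots j C)"
    using roots1 by (intro affine_hyperplane_eq_root_hyperplane[OF H(1) finite_curve_roots card_roots(1)])
      auto
  moreover have "H2 = root_hyperplane d (insert 0 (curve_roots j (- C)))"
    using roots2 by (intro affine_hyperplane_eq_root_hyperplane[OF H(2) _ card_roots(2)])
      (auto simp: finite_curve_roots)
  ultimately show thesis
    using that[OF C card_C] by (simp add: equipartition_pair_def)
qed

section \<open>Sufficiency and the count\<close>

lemma equiparts_equipartition_pair:
  assumes C: "C \<subseteq> {1..j}"
    and card: "card (curve_roots j C) = d" "card (insert 0 (curve_roots j (- C))) = d"
  shows "equiparts d j (fst (equipartition_pair d j C)) (snd (equipartition_pair d j C))"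
  unfolding equiparts_def equipartition_pair_def fst_conv snd_conv
proof (intro ballI)
  fix S1 S2 i
  assume S1: "S1 \<in> closed_sides d (root_hyperplane d (curve_roots j C))"
    and S2: "S2 \<in> closed_sides d (root_hyperplane d (insert 0 (curve_roots j (- C))))"
    and i: "i \<in> {1..j}"
  define R1 where "R1 = curve_roots j C"
  define R2 where "R2 = insert 0 (curve_roots j (- C))"
  have fin: "finite R1" "finite R2" by (simp_all add: R1_def R2_def finite_curve_roots)
  obtain c1 where "c1 \<noteq> 0" and c1: "\<And>t. moment_curve d t \<in> S1 \<longleftrightarrow> c1 * (\<Prod>r\<in>R1. t - r) \<le> 0"
    using closed_side_root_hyperplane[OF S1 finite_curve_roots card(1)] unfolding R1_def by blast
  obtain c2 where "c2 \<noteq> 0" and c2: "\<And>t. moment_curve d t \<in> S2 \<longleftrightarrow> c2 * (\<Prod>r\<in>R2. t - r) \<le> 0"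
    using closed_side_root_hyperplane[OF S2 _ card(2)] unfolding R2_def
    by (metis finite_curve_roots finite_insert)
  have R1_arc: "R1 \<inter> {real i<..<real i + 1} = arc_roots C i"
    by (simp add: R1_def curve_roots_inter_arc[OF i])
  have R2_arc: "R2 \<inter> {real i<..<real i + 1} = arc_roots (- C) i"
    using curve_roots_inter_arc[OF i, of "- C"] by (auto simp: R2_def)
  have "arc_mass d i (S1 \<inter> S2) = measure lborel
      {t \<in> {real i<..<real i + 1}. c1 * (\<Prod>r\<in>R1. t - r) \<le> 0 \<and> c2 * (\<Prod>r\<in>R2. t - r) \<le> 0}"
    by (simp add: arc_mass_def c1 c2)
  also have "\<dots> = 1 / 4"
  proof (cases "i \<in> C")
    case True
    with R1_arc R2_arc show ?thesis
      using measure_quadrant_alternating_roots[OF fin, of "real i" "real i + 1"] \<open>c1 \<noteq> 0\<close> \<open>c2 \<noteq> 0\<close>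
      by (simp add: arc_roots_def)
  next
    case False
    have "measure lborel {t \<in> {real i<..<real i + 1}.
        c2 * (\<Prod>r\<in>R2. t - r) \<le> 0 \<and> c1 * (\<Prod>r\<in>R1. t - r) \<le> 0} = (real i + 1 - real i) / 4"
      by (rule measure_quadrant_alternating_roots[OF fin(2,1)])
        (use False R1_arc R2_arc \<open>c1 \<noteq> 0\<close> \<open>c2 \<noteq> 0\<close> in \<open>simp_all add: arc_roots_def\<close>)
    then show ?thesis by (simp add: conj_commute)
  qed
  finally show "arc_mass d i (S1 \<inter> S2) = 1 / 4" .
qed

lemma equiparts_not_parallel:
  assumes "1 \<le> j" "equiparts d j H1 H2"
  shows "\<not> parallel_hyperplanes d H1 H2"
proof
  assume "parallel_hyperplanes d H1 H2"
  then obtain a b1 b2 where a: "\<exists>i<d. a i \<noteq> 0"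
    and H: "H1 = {x \<in> Rn d. lin d a x = b1}" "H2 = {x \<in> Rn d. lin d a x = b2}"
    unfolding parallel_hyperplanes_def by blast
  have "affine_hyperplane d H1" using a H(1) unfolding affine_hyperplane_def by blast
  \<comment> \<open>the two sides facing away from each other meet only inside \<open>H1\<close>\<close>
  obtain S1 S2 where S: "S1 \<in> closed_sides d H1" "S2 \<in> closed_sides d H2" and "S1 \<inter> S2 \<subseteq> H1"
  proof (cases "b1 \<le> b2")
    case True
    then show thesis
      using that[OF half_spaces_closed_sides(1)[OF a H(1)] half_spaces_closed_sides(2)[OF a H(2)]]
      by (simp add: H(1) subset_iff)
  next
    case False
    then show thesis
      using that[OF half_spaces_closed_sides(2)[OF a H(1)] half_spaces_closed_sides(1)[OF a H(2)]]
      by (simp add: H(1) subset_iff)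
  qed
  then have "arc_mass d 1 (S1 \<inter> S2) = 0"
    by (intro arc_mass_subset_hyperplane[OF \<open>affine_hyperplane d H1\<close>])
  moreover have "arc_mass d 1 (S1 \<inter> S2) = 1 / 4"
    using assms S unfolding equiparts_def by auto
  ultimately show False by simp
qed

lemma equipartition_pair_solution:
  assumes j: "2 * d = 3 * j + 1" and C: "C \<subseteq> {1..j}" "2 * card C = j + 1"
  shows "case equipartition_pair d j C of (H1, H2) \<Rightarrow>
    affine_hyperplane d H1 \<and> affine_hyperplane d H2 \<and> \<not> parallel_hyperplanes d H1 H2
    \<and> equiparts d j H1 H2 \<and> (\<lambda>_. 0) \<in> H2"
proof -
  have card: "card (curve_roots j C) = d" "card (insert 0 (curve_roots j (- C))) = d"
    using card_curve_roots_pair[OF C(1)] C(2) j by linarith+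
  have "1 \<le> j" "1 \<le> d" using C(2) j by presburger+
  have fin: "finite (curve_roots j C)" "finite (insert 0 (curve_roots j (- C)))"
    by (simp_all add: finite_curve_roots)
  have "(\<lambda>_. 0) \<in> root_hyperplane d (insert 0 (curve_roots j (- C)))"
    using moment_curve_in_root_hyperplane_iff[OF fin(2) card(2), of 0] by (simp add: moment_curve_0)
  with equiparts_equipartition_pair[OF C(1) card] equiparts_not_parallel[OF \<open>1 \<le> j\<close>]
    affine_hyperplane_root_hyperplane[OF fin(1) card(1) \<open>1 \<le> d\<close>]
    affine_hyperplane_root_hyperplane[OF fin(2) card(2) \<open>1 \<le> d\<close>]
  show ?thesis by (simp add: equipartition_pair_def)
qed

lemma inj_on_equipartition_pair:
  assumes "2 * d = 3 * j + 1"
  shows "inj_on (equipartition_pair d j) {C. C \<subseteq> {1..j} \<and> 2 * card C = j + 1}"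
proof (rule inj_onI)
  fix C C' assume C: "C \<in> {C. C \<subseteq> {1..j} \<and> 2 * card C = j + 1}"
    and C': "C' \<in> {C. C \<subseteq> {1..j} \<and> 2 * card C = j + 1}"
    and eq: "equipartition_pair d j C = equipartition_pair d j C'"
  have "card (curve_roots j C) = d" "card (curve_roots j C') = d"
    using card_curve_roots_pair(1)[of C j] card_curve_roots_pair(1)[of C' j] C C' assms by auto
  moreover have "root_hyperplane d (curve_roots j C) = root_hyperplane d (curve_roots j C')"
    using eq by (simp add: equipartition_pair_def)
  ultimately have "curve_roots j C = curve_roots j C'"
    by (intro root_hyperplane_inj[OF finite_curve_roots finite_curve_roots])
  with C C' show "C = C'" by (intro curve_roots_inj) auto
qed

lemma equipartition_solutions:
  assumes "2 * d = 3 * j + 1"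
  shows "{(H1, H2). affine_hyperplane d H1 \<and> affine_hyperplane d H2
      \<and> \<not> parallel_hyperplanes d H1 H2 \<and> equiparts d j H1 H2 \<and> (\<lambda>_. 0) \<in> H2}
    = equipartition_pair d j ` {C. C \<subseteq> {1..j} \<and> 2 * card C = j + 1}" (is "?Sol = ?Pairs")
proof (intro equalityI subsetI)
  fix x assume "x \<in> ?Sol"
  then obtain H1 H2 where x: "x = (H1, H2)" and H: "affine_hyperplane d H1" "affine_hyperplane d H2"
    "equiparts d j H1 H2" "(\<lambda>_. 0) \<in> H2" by blast
  obtain C where "C \<subseteq> {1..j}" "2 * card C = j + 1" "(H1, H2) = equipartition_pair d j C"
    by (rule equipartition_necessary[OF assms H])
  with x show "x \<in> ?Pairs" by blast
next
  fix x assume "x \<in> ?Pairs"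
  then obtain C where "C \<subseteq> {1..j}" "2 * card C = j + 1" "x = equipartition_pair d j C" by blast
  with equipartition_pair_solution[OF assms] show "x \<in> ?Sol" by simp
qed

lemma card_half_subsets:
  assumes "odd j"
  shows "card {C. C \<subseteq> {1..j} \<and> 2 * card C = j + 1} = j choose ((j - 1) div 2)"
proof -
  have "2 * card C = j + 1 \<longleftrightarrow> card C = (j + 1) div 2" for C :: "nat set"
    using assms by presburger
  then have "card {C. C \<subseteq> {1..j} \<and> 2 * card C = j + 1} = j choose ((j + 1) div 2)"
    using n_subsets[of "{1..j}" "(j + 1) div 2"] by simp
  also have "\<dots> = j choose ((j - 1) div 2)"
    using binomial_symmetric[of "(j + 1) div 2" j] assms by (auto elim!: oddE)
  finally show ?thesis .
qed

theorem lemma5p5: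
  fixes j d :: nat
  assumes "odd j" and "2 * d = 3 * j + 1"
  shows "card {(H1, H2). affine_hyperplane d H1 \<and> affine_hyperplane d H2
                \<and> \<not> parallel_hyperplanes d H1 H2 \<and> equiparts d j H1 H2
                \<and> (\<lambda>_. 0) \<in> H2}
         = j choose ((j - 1) div 2)"
  unfolding equipartition_solutions[OF assms(2)]
  using card_image[OF inj_on_equipartition_pair[OF assms(2)]] card_half_subsets[OF assms(1)]
  by simp

end
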